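(* Let $m,n\ge 2$ be integers not divisible by $3$. Every closed toroidal 1-form $f\,dx+g\,dy$ can be written uniquely in the form $r\,dx+s\,dy+\omega$ where $r,s\in\mathbb{F}_3$ (viewed as constant functions) and $\omega$ is an exact toroidal 1-form; that is, there exist unique $r,s\in\mathbb{F}_3$ and a unique exact toroidal 1-form $\omega=u\,dx+w\,dy$ with $f=r+u$ and $g=s+w$.
   Context: A function $h:\mathbb{Z}\times\mathbb{Z}\to\mathbb{F}_3$ is doubly periodic if $h_{i+m,j}=h_{i,j+n}=h_{i,j}$ for all $i,j\in\mathbb{Z}$. Its partial derivatives are $(D_xh)_{i,j}=h_{i+1,j}-h_{i,j}$ and $(D_yh)_{i,j}=h_{i,j+1}-h_{i,j}$ (again doubly periodic). A toroidal 1-form is a formal expression $f\,dx+g\,dy$ with $f,g:\mathbb{Z}\times\mathbb{Z}\to\mathbb{F}_3$ doubly periodic; it is closed if $D_yf=D_xg$, and exact if $f=D_xh$, $g=D_yh$ for some doubly periodic $h:\mathbb{Z}\times\mathbb{Z}\to\mathbb{F}_3$. *)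

theory Defs
  imports Main "HOL-Library.Numeral_Type"
begin

text \<open>The field F_3 is rendered as the library type 3 (integers modulo 3).
  Functions Z x Z to F_3 are curried functions int => int => 3.\<close>

definition doubly_periodic :: "int \<Rightarrow> int \<Rightarrow> (int \<Rightarrow> int \<Rightarrow> 3) \<Rightarrow> bool" where
  "doubly_periodic m n h \<longleftrightarrow> (\<forall>i j. h (i + m) j = h i j \<and> h i (j + n) = h i j)"

definition Dx :: "(int \<Rightarrow> int \<Rightarrow> 3) \<Rightarrow> int \<Rightarrow> int \<Rightarrow> 3" where
  "Dx h = (\<lambda>i j. h (i + 1) j - h i j)"

definition Dy :: "(int \<Rightarrow> int \<Rightarrow> 3) \<Rightarrow> int \<Rightarrow> int \<Rightarrow> 3" where
  "Dy h = (\<lambda>i j. h i (j + 1) - h i j)"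

definition toroidal_form :: "int \<Rightarrow> int \<Rightarrow> (int \<Rightarrow> int \<Rightarrow> 3) \<Rightarrow> (int \<Rightarrow> int \<Rightarrow> 3) \<Rightarrow> bool" where
  "toroidal_form m n f g \<longleftrightarrow> doubly_periodic m n f \<and> doubly_periodic m n g"

definition closed_form :: "(int \<Rightarrow> int \<Rightarrow> 3) \<Rightarrow> (int \<Rightarrow> int \<Rightarrow> 3) \<Rightarrow> bool" where
  "closed_form f g \<longleftrightarrow> Dy f = Dx g"

definition exact_form :: "int \<Rightarrow> int \<Rightarrow> (int \<Rightarrow> int \<Rightarrow> 3) \<Rightarrow> (int \<Rightarrow> int \<Rightarrow> 3) \<Rightarrow> bool" where
  "exact_form m n f g \<longleftrightarrow> (\<exists>h. doubly_periodic m n h \<and> f = Dx h \<and> g = Dy h)"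

end

theory Submission
  imports Defs
begin

text \<open>Since 3 divides neither m nor n, both are units in F_3, so a periodic function can be
  averaged over a period. Summation by parts shows that the weighted sum
  (1/m) sum_{k<m} k f(i + k, j) is a periodic primitive in x of f minus its row mean; closedness
  makes the row means of f one constant r, and a second primitive in y of the column means of g
  corrects the y-derivative up to a constant s. Conversely, the sums of an exact form over a
  period telescope to 0, so r and s are the means of f and g, which gives uniqueness.\<close>

lemma of_int_mult_self_3_eq_1:
  fixes m :: int
  assumes "\<not> 3 dvd m"
  shows "(of_int m :: 3) * of_int m = 1"
proof -
  have "(of_int m :: 3) = of_int (m mod 3)"
    by (simp add: bit1.of_int_eq)
  moreover have "m mod 3 = 1 \<or> m mod 3 = 2"
    using assms by presburger
  ultimately show ?thesis by auto
qed

lemma int_shift_invariant_eq: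
  fixes \<phi> :: "int \<Rightarrow> 'a"
  assumes "\<And>j. \<phi> (j + 1) = \<phi> j"
  shows "\<phi> j = \<phi> 0"
proof (induction j rule: int_induct[where k = 0])
  case (step1 i)
  then show ?case using assms[of i] by simp
next
  case (step2 i)
  then show ?case using assms[of "i - 1"] by simp
qed simp

lemma sum_period_shift:
  fixes \<phi> :: "int \<Rightarrow> 'a::ab_group_add"
  assumes periodic: "\<And>x. \<phi> (x + int p) = \<phi> x"
  shows "(\<Sum>k<p. \<phi> (i + int k)) = (\<Sum>k<p. \<phi> (int k))"
proof -
  have "(\<Sum>k<p. \<phi> (i + 1 + int k)) = (\<Sum>k<p. \<phi> (i + int k))" for i
  proof -
    have "\<phi> i + (\<Sum>k<p. \<phi> (i + 1 + int k)) = (\<Sum>k<Suc p. \<phi> (i + int k))"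
      by (subst sum.lessThan_Suc_shift) (simp add: ac_simps)
    also have "\<dots> = (\<Sum>k<p. \<phi> (i + int k)) + \<phi> i"
      using periodic by simp
    finally show ?thesis by simp
  qed
  then have "(\<Sum>k<p. \<phi> (i + int k)) = (\<Sum>k<p. \<phi> (0 + int k))"
    by (rule int_shift_invariant_eq[of "\<lambda>i. \<Sum>k<p. \<phi> (i + int k)"])
  then show ?thesis
    by simp
qed

lemma sum_period_diff_eq_0:
  fixes \<phi> :: "int \<Rightarrow> 'a::ab_group_add"
  assumes "\<And>x. \<phi> (x + int p) = \<phi> x"
  shows "(\<Sum>k<p. \<phi> (int k + 1) - \<phi> (int k)) = 0"
  using sum_period_shift[of \<phi> p, OF assms, of 1] by (simp add: sum_subtractf add.commute)

text \<open>There is no division in comm_ring_1 (and F_3 is not a field instance), so the inverse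
  of the period p is passed as a parameter c with p c = 1.\<close>

definition period_mean :: "'a::comm_ring_1 \<Rightarrow> nat \<Rightarrow> (int \<Rightarrow> 'a) \<Rightarrow> 'a" where
  "period_mean c p \<phi> = c * (\<Sum>k<p. \<phi> (int k))"

definition period_primitive :: "'a::comm_ring_1 \<Rightarrow> nat \<Rightarrow> (int \<Rightarrow> 'a) \<Rightarrow> int \<Rightarrow> 'a" where
  "period_primitive c p \<phi> i = c * (\<Sum>k<p. of_nat k * \<phi> (i + int k))"

lemma period_mean_const_plus_diff:
  fixes \<psi> :: "int \<Rightarrow> 'a::comm_ring_1"
  assumes "\<And>x. \<psi> (x + int p) = \<psi> x" and "of_nat p * c = 1"
  shows "period_mean c p (\<lambda>x. r + (\<psi> (x + 1) - \<psi> x)) = r"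
proof -
  have "(\<Sum>k<p. r + (\<psi> (int k + 1) - \<psi> (int k))) = of_nat p * r"
    using sum_period_diff_eq_0[of \<psi> p, OF assms(1)] by (simp add: sum.distrib)
  then show ?thesis
    using assms(2) by (simp add: period_mean_def mult.assoc[symmetric] mult.commute)
qed

text \<open>Summation by parts: moving from i to i + 1 lowers every weight by one, and the
  wrapped-around term \<phi>(i + p) = \<phi> i enters with weight p.\<close>

lemma period_primitive_diff:
  fixes \<phi> :: "int \<Rightarrow> 'a::comm_ring_1"
  assumes periodic: "\<And>x. \<phi> (x + int p) = \<phi> x" and inverse: "of_nat p * c = 1"
  shows "period_primitive c p \<phi> (i + 1) - period_primitive c p \<phi> i = \<phi> i - period_mean c p \<phi>"
proof -
  have "period_primitive c p \<phi> (i + 1) + period_mean c p \<phi>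
      = c * ((\<Sum>k<p. of_nat k * \<phi> (i + 1 + int k)) + (\<Sum>k<p. \<phi> (i + 1 + int k)))"
    unfolding period_primitive_def period_mean_def sum_period_shift[of \<phi> p, OF periodic]
    by (simp add: distrib_left)
  also have "\<dots> = c * (\<Sum>k<Suc p. of_nat k * \<phi> (i + int k))"
    by (subst sum.lessThan_Suc_shift) (simp add: sum.distrib[symmetric] algebra_simps)
  also have "\<dots> = c * ((\<Sum>k<p. of_nat k * \<phi> (i + int k)) + of_nat p * \<phi> i)"
    using periodic by simp
  also have "\<dots> = period_primitive c p \<phi> i + \<phi> i"
    using inverse by (simp add: period_primitive_def distrib_left mult.assoc[symmetric] mult.commute)
  finally show ?thesis
    by (simp add: algebra_simps)
qed

lemma period_primitive_periodic:
  fixes \<phi> :: "int \<Rightarrow> 'a::comm_ring_1"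
  assumes "\<And>x. \<phi> (x + int p) = \<phi> x"
  shows "period_primitive c p \<phi> (i + int p) = period_primitive c p \<phi> i"
proof -
  have "\<phi> (i + int p + int k) = \<phi> (i + int k)" for k
    using assms[of "i + int k"] by (simp add: ac_simps)
  then show ?thesis
    by (simp add: period_primitive_def)
qed

lemma period_primitive_diff_fun:
  "period_primitive c p (\<lambda>x. \<phi> x - \<psi> x) i = period_primitive c p \<phi> i - period_primitive c p \<psi> i"
  by (simp add: period_primitive_def right_diff_distrib sum_subtractf)

lemma period_primitive_shift:
  "period_primitive c p (\<lambda>x. \<phi> (x + 1)) i = period_primitive c p \<phi> (i + 1)"
  by (simp add: period_primitive_def ac_simps)

lemma closed_formD:
  assumes "closed_form f g"
  shows "f i (j + 1) - f i j = g (i + 1) j - g i j"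
  using assms unfolding closed_form_def Dx_def Dy_def by (metis (no_types))

lemma closed_form_row_mean_eq:
  assumes "closed_form f g" and g_periodic: "\<And>x y. g (x + int m) y = g x y"
  shows "period_mean c m (\<lambda>x. f x y) = period_mean c m (\<lambda>x. f x 0)"
proof (rule int_shift_invariant_eq[of "\<lambda>y. period_mean c m (\<lambda>x. f x y)"])
  fix y
  have "(\<Sum>k<m. f (int k) (y + 1)) - (\<Sum>k<m. f (int k) y) = 0"
    using sum_period_diff_eq_0[of "\<lambda>x. g x y", OF g_periodic]
    by (simp add: sum_subtractf[symmetric] closed_formD[OF assms(1)])
  then show "period_mean c m (\<lambda>x. f x (y + 1)) = period_mean c m (\<lambda>x. f x y)"
    by (simp add: period_mean_def right_diff_distrib[symmetric])
qed

lemma closed_form_exact_up_to_constants: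
  fixes a b :: 3
  assumes "toroidal_form (int m) (int n) f g" and "closed_form f g"
    and inverse_m: "of_nat m * a = 1" and inverse_n: "of_nat n * b = 1"
  shows "\<exists>r s. exact_form (int m) (int n) (\<lambda>i j. f i j - r) (\<lambda>i j. g i j - s)"
proof -
  have f_periodic: "f (i + int m) j = f i j" "f i (j + int n) = f i j"
    and g_periodic: "g (i + int m) j = g i j" "g i (j + int n) = g i j" for i j
    using assms(1) unfolding toroidal_form_def doubly_periodic_def by auto
  define r where "r = period_mean a m (\<lambda>x. f x 0)"
  define G where "G j = period_mean a m (\<lambda>x. g x j)" for j
  define s where "s = period_mean b n G"
  define A where "A i j = period_primitive a m (\<lambda>x. f x j) i" for i j
  define B where "B = period_primitive b n G"
  have G_periodic: "G (j + int n) = G j" for j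
    by (simp add: G_def g_periodic)
  have Dx_A: "A (i + 1) j - A i j = f i j - r" for i j
    using period_primitive_diff[of "\<lambda>x. f x j", OF f_periodic(1) inverse_m]
      closed_form_row_mean_eq[OF assms(2) g_periodic(1)]
    by (simp add: A_def r_def)
  have Dy_A: "A i (j + 1) - A i j = g i j - G j" for i j
  proof -
    have "A i (j + 1) - A i j = period_primitive a m (\<lambda>x. g (x + 1) j - g x j) i"
      by (simp add: A_def period_primitive_diff_fun[symmetric] closed_formD[OF assms(2)])
    also have "\<dots> = period_primitive a m (\<lambda>x. g x j) (i + 1) - period_primitive a m (\<lambda>x. g x j) i"
      by (simp add: period_primitive_diff_fun period_primitive_shift[of a m "\<lambda>x. g x j"])
    also have "\<dots> = g i j - G j"
      using period_primitive_diff[of "\<lambda>x. g x j", OF g_periodic(1) inverse_m]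
      by (simp add: G_def)
    finally show ?thesis .
  qed
  have Dy_B: "B (j + 1) - B j = G j - s" for j
    using period_primitive_diff[of G, OF G_periodic inverse_n] by (simp add: B_def s_def)
  define h where "h i j = A i j + B j" for i j
  have "doubly_periodic (int m) (int n) h"
    using period_primitive_periodic[of "\<lambda>x. f x _", OF f_periodic(1)]
      period_primitive_periodic[of G, OF G_periodic]
    by (simp add: doubly_periodic_def h_def A_def B_def f_periodic(2))
  moreover have "Dx h = (\<lambda>i j. f i j - r)"
    using Dx_A by (simp add: fun_eq_iff Dx_def h_def algebra_simps)
  moreover have "Dy h = (\<lambda>i j. g i j - s)"
  proof (intro ext)
    fix i j
    have "Dy h i j = (A i (j + 1) - A i j) + (B (j + 1) - B j)"
      by (simp add: Dy_def h_def algebra_simps)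
    then show "Dy h i j = g i j - s"
      using Dy_A Dy_B by simp
  qed
  ultimately show ?thesis
    unfolding exact_form_def by metis
qed

lemma exact_form_period_mean:
  assumes "exact_form (int m) (int n) u w"
  shows "of_nat m * a = 1 \<Longrightarrow> period_mean a m (\<lambda>x. r + u x j) = r"
    and "of_nat n * b = 1 \<Longrightarrow> period_mean b n (\<lambda>y. s + w i y) = s"
proof -
  obtain h where h: "doubly_periodic (int m) (int n) h" "u = Dx h" "w = Dy h"
    using assms unfolding exact_form_def by blast
  then have "h (x + int m) j = h x j" "h i (y + int n) = h i y" for x y
    unfolding doubly_periodic_def by auto
  then show "of_nat m * a = 1 \<Longrightarrow> period_mean a m (\<lambda>x. r + u x j) = r"
    and "of_nat n * b = 1 \<Longrightarrow> period_mean b n (\<lambda>y. s + w i y) = s"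
    using period_mean_const_plus_diff[of "\<lambda>x. h x j" m a r]
      period_mean_const_plus_diff[of "h i" n b s]
    by (simp_all add: h Dx_def Dy_def)
qed

theorem mainTheorem3:
  fixes m n :: int and f g :: "int \<Rightarrow> int \<Rightarrow> 3"
  assumes "m \<ge> 2" and "n \<ge> 2" and "\<not> 3 dvd m" and "\<not> 3 dvd n"
    and "toroidal_form m n f g" and "closed_form f g"
  shows "\<exists>!(r, s, u, w). exact_form m n u w \<and>
            f = (\<lambda>i j. r + u i j) \<and> g = (\<lambda>i j. s + w i j)"
proof -
  obtain M N where m: "m = int M" and n: "n = int N"
    using assms(1,2) by (metis nonneg_int_cases order_trans zero_le_numeral)
  have inverse_m: "of_nat M * (of_nat M :: 3) = 1" and inverse_n: "of_nat N * (of_nat N :: 3) = 1"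
    using of_int_mult_self_3_eq_1[OF assms(3)] of_int_mult_self_3_eq_1[OF assms(4)] m n by simp_all
  obtain r s where exact: "exact_form m n (\<lambda>i j. f i j - r) (\<lambda>i j. g i j - s)"
    using closed_form_exact_up_to_constants[OF assms(5,6)[unfolded m n] inverse_m inverse_n] m n
    by blast
  have constants_unique: "r' = r \<and> s' = s"
    if "exact_form m n u w" "f = (\<lambda>i j. r' + u i j)" "g = (\<lambda>i j. s' + w i j)" for r' s' u w
    using exact_form_period_mean(1)[OF that(1)[unfolded m n] inverse_m, of r' 0]
      exact_form_period_mean(2)[OF that(1)[unfolded m n] inverse_n, of s' 0]
      exact_form_period_mean(1)[OF exact[unfolded m n] inverse_m, of r 0]
      exact_form_period_mean(2)[OF exact[unfolded m n] inverse_n, of s 0]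
      that(2,3)
    by simp
  show ?thesis
    by (rule ex1I[where a = "(r, s, \<lambda>i j. f i j - r, \<lambda>i j. g i j - s)"])
      (use exact constants_unique in auto)
qed

end
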